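(* Let $k$ be a field and $\mathcal{R}=\mathrm{RCFM}(k)$. Then: (1) $\mathsf{A}\mathcal{R}=\{\mathsf{R}\in\mathcal{R}: \mathsf{r}_{0j}=0\text{ for all }j\}$; (2) $(\mathsf{I}-\mathsf{A})\mathcal{R}=\{\mathsf{R}\in\mathcal{R}: \sum_{i\in\mathbb{N}_0}\mathsf{r}_{ij}=0\text{ for all }j\}$; (3) $(\mathsf{I}-\mathsf{A}^t)\mathcal{R}=\{\mathsf{R}\in\mathcal{R}: \text{for every }i\in\mathbb{N}_0,\ \sum_{n\ge i}\mathsf{r}_{nj}=0\text{ for all but finitely many }j\}$; (4) $(\mathsf{I}-\mathsf{B}^t)\mathcal{R}=\{\mathsf{R}\in\mathcal{R}: \text{for every }m\in\mathbb{N}_0\text{ and }i\le m,\ \sum_{n\ge m}\mathsf{r}_{i+\frac{n(n+1)}{2},\,j}=0\text{ for all but finitely many }j\}$.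
   Context: $\mathcal{R}=\mathrm{RCFM}(k)$ is the $k$-algebra of $\mathbb{N}_0\times\mathbb{N}_0$ matrices over $k$ with finitely many nonzero entries in each row and each column; $\mathsf{r}_{ij}$ denotes the $(i,j)$ entry of $\mathsf{R}$ (the sums above are finite since columns are finite). $\mathsf{A}$: $\mathsf{a}_{i+1,i}=1$ ($i\in\mathbb{N}_0$), other entries $0$; $\mathsf{B}$: $\mathsf{b}_{\frac{n(n+1)}{2}+i,\frac{(n-1)n}{2}+i}=1$ ($n>0$, $0\le i<n$), other entries $0$; $\mathsf{I}$ is the identity and ${}^t$ transposition. *)

theory Defs
  imports Main
begin

text \<open>N_0 x N_0 matrices over k, represented as functions (row index, column index).\<close>
type_synonym 'a nmat = "nat \<Rightarrow> nat \<Rightarrow> 'a"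

definition RCFM :: "'a::zero nmat set" where
  "RCFM = {R. (\<forall>i. finite {j. R i j \<noteq> 0}) \<and> (\<forall>j. finite {i. R i j \<noteq> 0})}"

text \<open>Matrix product; the sum over l is finite for row-finite M (only nonzero terms of row i of M).\<close>
definition nmat_mult :: "'a::semiring_0 nmat \<Rightarrow> 'a nmat \<Rightarrow> 'a nmat" (infixl "\<star>" 70) where
  "M \<star> N = (\<lambda>i j. \<Sum>l\<in>{l. M i l \<noteq> 0}. M i l * N l j)"

definition nmat_id :: "'a::{zero,one} nmat" where
  "nmat_id = (\<lambda>i j. if i = j then 1 else 0)"

definition nmat_minus :: "'a::minus nmat \<Rightarrow> 'a nmat \<Rightarrow> 'a nmat" where
  "nmat_minus M N = (\<lambda>i j. M i j - N i j)"

definition nmat_transpose :: "'a nmat \<Rightarrow> 'a nmat" where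
  "nmat_transpose M = (\<lambda>i j. M j i)"

definition matA :: "'a::{zero,one} nmat" where
  "matA = (\<lambda>i j. if i = Suc j then 1 else 0)"

definition matB :: "'a::{zero,one} nmat" where
  "matB = (\<lambda>r c. if (\<exists>n i. 0 < n \<and> i < n \<and> r = n * (n + 1) div 2 + i \<and> c = (n - 1) * n div 2 + i)
                 then 1 else 0)"

definition left_mult_image :: "'a::semiring_0 nmat \<Rightarrow> 'a nmat set" where
  "left_mult_image M = {M \<star> R | R. R \<in> RCFM}"

definition col_sum :: "'a::comm_monoid_add nmat \<Rightarrow> nat \<Rightarrow> 'a" where
  "col_sum R j = (\<Sum>i\<in>{i. R i j \<noteq> 0}. R i j)"

definition tail_col_sum :: "'a::comm_monoid_add nmat \<Rightarrow> nat \<Rightarrow> nat \<Rightarrow> 'a" where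
  "tail_col_sum R i j = (\<Sum>n\<in>{n. i \<le> n \<and> R n j \<noteq> 0}. R n j)"

definition tri_col_sum :: "'a::comm_monoid_add nmat \<Rightarrow> nat \<Rightarrow> nat \<Rightarrow> nat \<Rightarrow> 'a" where
  "tri_col_sum R m i j = (\<Sum>n\<in>{n. m \<le> n \<and> R (i + n * (n + 1) div 2) j \<noteq> 0}. R (i + n * (n + 1) div 2) j)"

end

theory Submission
  imports Defs
begin

(*
  Each matrix acts on R by row operations: A moves row p to row p + 1, while A^t and B^t are
  selection matrices P_f, (P_f R) r = R (f r), for an injective map f with r < f r (f = Suc,
  resp. the map sending entry i of the m-th triangular block to entry i of the next block).
  The equation (I - P_f) R = S is solved by telescoping along f-orbits,
  R r = S r + S (f r) + S (f (f r)) + ..., a finite sum in each column because columns are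
  finite; R is then row-finite exactly when these orbit sums are finitely supported in every
  row, which for the two choices of f are conditions (3) and (4). Likewise (I - A) R = S is
  solved by the partial column sums of S, which vanish eventually iff all column sums are 0.
*)

lemma RCFM_row_finite: "R \<in> RCFM \<Longrightarrow> finite {j. R i j \<noteq> 0}"
  by (simp add: RCFM_def)

lemma RCFM_col_finite: "R \<in> RCFM \<Longrightarrow> finite {i. R i j \<noteq> 0}"
  by (simp add: RCFM_def)

lemma RCFM_col_eventually_zero:
  assumes "R \<in> RCFM" obtains N where "\<And>i. N \<le> i \<Longrightarrow> R i j = 0"
proof -
  obtain N where "\<forall>i\<in>{i. R i j \<noteq> 0}. i < N"
    using RCFM_col_finite[OF assms] by (auto simp: finite_nat_set_iff_bounded)
  then show ?thesis using that by (meson leD mem_Collect_eq)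
qed

lemma finite_nonzero_if_eventually_zero:
  fixes g :: "nat \<Rightarrow> 'a::zero"
  assumes "\<And>i. N \<le> i \<Longrightarrow> g i = 0"
  shows "finite {i. g i \<noteq> 0}"
proof (rule finite_subset)
  show "{i. g i \<noteq> 0} \<subseteq> {..<N}" using assms not_le by blast
qed simp

lemma RCFM_transpose: "R \<in> RCFM \<Longrightarrow> nmat_transpose R \<in> RCFM"
  by (simp add: RCFM_def nmat_transpose_def)

lemma RCFM_minus:
  fixes M N :: "'a::group_add nmat"
  assumes "M \<in> RCFM" "N \<in> RCFM"
  shows "nmat_minus M N \<in> RCFM"
proof -
  have "finite {j. nmat_minus M N i j \<noteq> 0}" for i
    by (rule finite_subset[of _ "{j. M i j \<noteq> 0} \<union> {j. N i j \<noteq> 0}"])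
       (auto simp: nmat_minus_def assms RCFM_row_finite)
  moreover have "finite {i. nmat_minus M N i j \<noteq> 0}" for j
    by (rule finite_subset[of _ "{i. M i j \<noteq> 0} \<union> {i. N i j \<noteq> 0}"])
       (auto simp: nmat_minus_def assms RCFM_col_finite)
  ultimately show ?thesis by (simp add: RCFM_def)
qed

lemma nmat_mult_eq_sum_superset:
  assumes "finite F" "{l. M i l \<noteq> 0} \<subseteq> F"
  shows "(M \<star> R) i j = (\<Sum>l\<in>F. M i l * R l j)"
  unfolding nmat_mult_def by (rule sum.mono_neutral_left) (use assms in auto)

lemma nmat_mult_nonzero_imp:
  "(M \<star> R) i j \<noteq> 0 \<Longrightarrow> \<exists>l. M i l \<noteq> 0 \<and> R l j \<noteq> 0"
proof -
  assume "(M \<star> R) i j \<noteq> 0"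
  then obtain l where "M i l * R l j \<noteq> 0"
    unfolding nmat_mult_def by (meson sum.not_neutral_contains_not_neutral)
  then show ?thesis by (metis mult_zero_left mult_zero_right)
qed

lemma RCFM_mult:
  assumes "M \<in> RCFM" "R \<in> RCFM"
  shows "M \<star> R \<in> RCFM"
proof -
  have "finite {j. (M \<star> R) i j \<noteq> 0}" for i
    by (rule finite_subset[of _ "\<Union>l\<in>{l. M i l \<noteq> 0}. {j. R l j \<noteq> 0}"])
       (auto dest: nmat_mult_nonzero_imp simp: assms RCFM_row_finite)
  moreover have "finite {i. (M \<star> R) i j \<noteq> 0}" for j
    by (rule finite_subset[of _ "\<Union>l\<in>{l. R l j \<noteq> 0}. {i. M i l \<noteq> 0}"])
       (auto dest: nmat_mult_nonzero_imp simp: assms RCFM_col_finite)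
  ultimately show ?thesis by (simp add: RCFM_def)
qed

lemma left_mult_image_subset_RCFM: "M \<in> RCFM \<Longrightarrow> left_mult_image M \<subseteq> RCFM"
  by (auto simp: left_mult_image_def RCFM_mult)

lemma nmat_left_diff_distrib:
  fixes M N R :: "'a::ring nmat"
  assumes "M \<in> RCFM" "N \<in> RCFM"
  shows "nmat_minus M N \<star> R = nmat_minus (M \<star> R) (N \<star> R)"
proof (intro ext)
  fix i j
  let ?F = "{l. M i l \<noteq> 0} \<union> {l. N i l \<noteq> 0}"
  have F: "finite ?F" using assms by (simp add: RCFM_row_finite)
  have "(nmat_minus M N \<star> R) i j = (\<Sum>l\<in>?F. nmat_minus M N i l * R l j)"
    by (rule nmat_mult_eq_sum_superset[OF F]) (auto simp: nmat_minus_def)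
  also have "\<dots> = (\<Sum>l\<in>?F. M i l * R l j) - (\<Sum>l\<in>?F. N i l * R l j)"
    by (simp add: nmat_minus_def left_diff_distrib sum_subtractf)
  also have "\<dots> = (M \<star> R) i j - (N \<star> R) i j"
    by (simp add: nmat_mult_eq_sum_superset[OF F, symmetric])
  finally show "(nmat_minus M N \<star> R) i j = nmat_minus (M \<star> R) (N \<star> R) i j"
    by (simp add: nmat_minus_def)
qed

definition nmat_of_fun :: "(nat \<Rightarrow> nat) \<Rightarrow> 'a::{zero,one} nmat" where
  "nmat_of_fun f = (\<lambda>r c. if c = f r then 1 else 0)"

lemma nmat_id_eq_nmat_of_fun: "nmat_id = nmat_of_fun id"
  by (auto simp: fun_eq_iff nmat_id_def nmat_of_fun_def)

lemma nmat_of_fun_mult: "(nmat_of_fun f \<star> (R :: 'a::semiring_1 nmat)) i j = R (f i) j"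
proof -
  have "(nmat_of_fun f \<star> R) i j = (\<Sum>l\<in>{f i}. nmat_of_fun f i l * R l j)"
    by (rule nmat_mult_eq_sum_superset) (auto simp: nmat_of_fun_def)
  then show ?thesis by (simp add: nmat_of_fun_def)
qed

lemma nmat_id_mult: "nmat_id \<star> (R :: 'a::semiring_1 nmat) = R"
  by (simp add: fun_eq_iff nmat_id_eq_nmat_of_fun nmat_of_fun_mult)

lemma RCFM_nmat_of_fun:
  assumes "inj f" shows "nmat_of_fun f \<in> RCFM"
proof -
  have "{r. c = f r} \<subseteq> {inv f c}" for c using assms by auto
  then show ?thesis
    unfolding RCFM_def nmat_of_fun_def by (auto intro: finite_subset)
qed

lemma RCFM_nmat_id: "nmat_id \<in> RCFM"
  by (simp add: nmat_id_eq_nmat_of_fun RCFM_nmat_of_fun)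

lemma id_minus_nmat_of_fun_mult:
  fixes R :: "'a::ring_1 nmat"
  assumes "inj f"
  shows "nmat_minus nmat_id (nmat_of_fun f) \<star> R = (\<lambda>i j. R i j - R (f i) j)"
  unfolding nmat_left_diff_distrib[OF RCFM_nmat_id RCFM_nmat_of_fun[OF assms]]
  by (simp add: fun_eq_iff nmat_minus_def nmat_id_mult nmat_of_fun_mult)

lemma matA_transpose: "nmat_transpose matA = nmat_of_fun Suc"
  by (auto simp: fun_eq_iff nmat_transpose_def matA_def nmat_of_fun_def)

lemma RCFM_matA: "matA \<in> RCFM"
proof -
  have "nmat_transpose (nmat_of_fun Suc) \<in> RCFM"
    by (intro RCFM_transpose RCFM_nmat_of_fun inj_Suc)
  then show ?thesis by (simp add: matA_transpose[symmetric] nmat_transpose_def)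
qed

lemma matA_mult:
  "(matA \<star> (R :: 'a::semiring_1 nmat)) r j = (case r of 0 \<Rightarrow> 0 | Suc p \<Rightarrow> R p j)"
proof -
  have "(matA \<star> R) r j = (\<Sum>l\<in>{r - 1}. matA r l * R l j)"
    by (rule nmat_mult_eq_sum_superset) (auto simp: matA_def)
  then show ?thesis by (cases r) (auto simp: matA_def)
qed

lemma sum_nonzero_eq_sum_lessThan:
  fixes g :: "nat \<Rightarrow> 'a::comm_monoid_add"
  assumes "\<And>i. N \<le> i \<Longrightarrow> g i = 0"
  shows "(\<Sum>i\<in>{i. g i \<noteq> 0}. g i) = (\<Sum>i<N. g i)"
  by (rule sum.mono_neutral_left) (use assms not_le in auto)

lemma sum_nonzero_ge_shift:
  fixes g :: "nat \<Rightarrow> 'a::comm_monoid_add"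
  shows "(\<Sum>n\<in>{n. m \<le> n \<and> g n \<noteq> 0}. g n) = (\<Sum>k\<in>{k. g (k + m) \<noteq> 0}. g (k + m))"
proof (rule sum.reindex_cong[where l = "\<lambda>k. k + m"])
  show "{n. m \<le> n \<and> g n \<noteq> 0} = (\<lambda>k. k + m) ` {k. g (k + m) \<noteq> 0}"
  proof (intro set_eqI iffI)
    fix n assume "n \<in> {n. m \<le> n \<and> g n \<noteq> 0}"
    then show "n \<in> (\<lambda>k. k + m) ` {k. g (k + m) \<noteq> 0}"
      by (intro image_eqI[where x = "n - m"]) auto
  qed auto
qed (auto simp: inj_on_def)

definition orbit_col_sum :: "(nat \<Rightarrow> nat) \<Rightarrow> 'a::comm_monoid_add nmat \<Rightarrow> nat \<Rightarrow> nat \<Rightarrow> 'a" where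
  "orbit_col_sum f S r j = (\<Sum>k\<in>{k. S ((f ^^ k) r) j \<noteq> 0}. S ((f ^^ k) r) j)"

lemma funpow_increasing_ge:
  assumes "\<And>r. r < f r" shows "r + k \<le> (f ^^ k) r"
  by (induction k) (auto intro: Suc_leI le_less_trans[OF _ assms])

lemma orbit_col_sum_eq_sum_lessThan:
  assumes "\<And>r. r < f r" "\<And>i. N \<le> i \<Longrightarrow> S i j = 0"
  shows "orbit_col_sum f S r j = (\<Sum>k<N. S ((f ^^ k) r) j)"
  unfolding orbit_col_sum_def
  by (rule sum_nonzero_eq_sum_lessThan)
     (meson assms le_add2 le_trans funpow_increasing_ge)

lemma orbit_col_sum_eventually_zero:
  assumes "\<And>r. r < f r" "\<And>i. N \<le> i \<Longrightarrow> S i j = 0" "N \<le> r"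
  shows "orbit_col_sum f S r j = 0"
proof -
  have "S ((f ^^ k) r) j = 0" for k
    using assms funpow_increasing_ge[of f r k] by simp
  then show ?thesis by (simp add: orbit_col_sum_def)
qed

lemma orbit_col_sum_step:
  fixes S :: "'a::comm_monoid_add nmat"
  assumes "\<And>r. r < f r" "S \<in> RCFM"
  shows "orbit_col_sum f S r j = S r j + orbit_col_sum f S (f r) j"
proof -
  obtain N where N: "\<And>i. N \<le> i \<Longrightarrow> S i j = 0"
    using RCFM_col_eventually_zero[OF assms(2)] by blast
  then have "orbit_col_sum f S r j = (\<Sum>k<Suc N. S ((f ^^ k) r) j)"
    by (intro orbit_col_sum_eq_sum_lessThan assms) auto
  also have "\<dots> = S r j + (\<Sum>k<N. S ((f ^^ k) (f r)) j)"
    by (subst sum.lessThan_Suc_shift) (simp add: funpow_Suc_right del: funpow.simps)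
  also have "(\<Sum>k<N. S ((f ^^ k) (f r)) j) = orbit_col_sum f S (f r) j"
    using N by (intro orbit_col_sum_eq_sum_lessThan[symmetric] assms)
  finally show ?thesis .
qed

lemma orbit_col_sum_telescope:
  fixes R :: "'a::ab_group_add nmat"
  assumes "\<And>r. r < f r" "R \<in> RCFM"
  shows "orbit_col_sum f (\<lambda>i j. R i j - R (f i) j) r j = R r j"
proof -
  obtain N where N: "\<And>i. N \<le> i \<Longrightarrow> R i j = 0"
    using RCFM_col_eventually_zero[OF assms(2)] by blast
  have "R i j - R (f i) j = 0" if "N \<le> i" for i
  proof -
    have "N \<le> f i" using that assms(1)[of i] by linarith
    then show ?thesis using that N by simp
  qed
  then have "orbit_col_sum f (\<lambda>i j. R i j - R (f i) j) r j
      = (\<Sum>k<N. R ((f ^^ k) r) j - R (f ((f ^^ k) r)) j)"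
    by (intro orbit_col_sum_eq_sum_lessThan assms(1))
  also have "\<dots> = (\<Sum>k<N. R ((f ^^ k) r) j - R ((f ^^ Suc k) r) j)"
    by simp
  also have "\<dots> = R ((f ^^ 0) r) j - R ((f ^^ N) r) j"
    by (rule sum_lessThan_telescope')
  also have "R ((f ^^ N) r) j = 0"
    using N funpow_increasing_ge[OF assms(1), of r N] by simp
  finally show ?thesis by simp
qed

lemma RCFM_orbit_col_sum_iff:
  assumes "\<And>r. r < f r" "S \<in> RCFM"
  shows "orbit_col_sum f S \<in> RCFM \<longleftrightarrow> (\<forall>r. finite {j. orbit_col_sum f S r j \<noteq> 0})"
proof -
  have "finite {r. orbit_col_sum f S r j \<noteq> 0}" for j
  proof -
    obtain N where N: "\<And>i. N \<le> i \<Longrightarrow> S i j = 0"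
      using RCFM_col_eventually_zero[OF assms(2)] by blast
    have "orbit_col_sum f S r j = 0" if "N \<le> r" for r
      using that by (intro orbit_col_sum_eventually_zero[where N = N] assms(1) N)
    then show ?thesis by (rule finite_nonzero_if_eventually_zero)
  qed
  then show ?thesis by (simp add: RCFM_def)
qed

lemma orbit_col_sum_id_minus_nmat_of_fun_mult:
  fixes R :: "'a::ring_1 nmat"
  assumes "inj f" "\<And>r. r < f r" "R \<in> RCFM"
  shows "orbit_col_sum f (nmat_minus nmat_id (nmat_of_fun f) \<star> R) = R"
  unfolding id_minus_nmat_of_fun_mult[OF assms(1)]
  by (simp add: fun_eq_iff orbit_col_sum_telescope[OF assms(2,3)])

lemma id_minus_nmat_of_fun_mult_orbit_col_sum:
  fixes S :: "'a::ring_1 nmat"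
  assumes "inj f" "\<And>r. r < f r" "S \<in> RCFM"
  shows "nmat_minus nmat_id (nmat_of_fun f) \<star> orbit_col_sum f S = S"
proof (intro ext)
  fix r j
  show "(nmat_minus nmat_id (nmat_of_fun f) \<star> orbit_col_sum f S) r j = S r j"
    using orbit_col_sum_step[OF assms(2,3), of r j]
    by (simp add: id_minus_nmat_of_fun_mult[OF assms(1)])
qed

theorem left_mult_image_id_minus_nmat_of_fun:
  fixes f :: "nat \<Rightarrow> nat"
  assumes inj: "inj f" and increasing: "\<And>r. r < f r"
  shows "left_mult_image (nmat_minus nmat_id (nmat_of_fun f) :: 'a::ring_1 nmat)
     = {S \<in> RCFM. \<forall>r. finite {j. orbit_col_sum f S r j \<noteq> 0}}"
proof (intro set_eqI iffI)
  fix S :: "'a nmat"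
  assume S: "S \<in> left_mult_image (nmat_minus nmat_id (nmat_of_fun f))"
  then obtain R where R: "R \<in> RCFM" and SR: "S = nmat_minus nmat_id (nmat_of_fun f) \<star> R"
    by (auto simp: left_mult_image_def)
  have "S \<in> RCFM"
    using S left_mult_image_subset_RCFM RCFM_minus RCFM_nmat_id RCFM_nmat_of_fun[OF inj] by blast
  moreover have "orbit_col_sum f S = R"
    unfolding SR by (rule orbit_col_sum_id_minus_nmat_of_fun_mult[OF inj increasing R])
  ultimately show "S \<in> {S \<in> RCFM. \<forall>r. finite {j. orbit_col_sum f S r j \<noteq> 0}}"
    using R by (simp add: RCFM_row_finite)
next
  fix S :: "'a nmat"
  assume "S \<in> {S \<in> RCFM. \<forall>r. finite {j. orbit_col_sum f S r j \<noteq> 0}}"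
  then have S: "S \<in> RCFM" and "orbit_col_sum f S \<in> RCFM"
    by (auto simp: RCFM_orbit_col_sum_iff[OF increasing])
  with id_minus_nmat_of_fun_mult_orbit_col_sum[OF inj increasing S]
  show "S \<in> left_mult_image (nmat_minus nmat_id (nmat_of_fun f))"
    unfolding left_mult_image_def by (metis (mono_tags, lifting) mem_Collect_eq)
qed

lemma left_mult_image_matA:
  "left_mult_image (matA :: 'a::semiring_1 nmat) = {S \<in> RCFM. \<forall>j. S 0 j = 0}"
proof (intro set_eqI iffI)
  fix S :: "'a nmat"
  assume S: "S \<in> left_mult_image matA"
  then obtain R where "S = matA \<star> R" by (auto simp: left_mult_image_def)
  then have "S 0 j = 0" for j by (simp add: matA_mult)
  with S show "S \<in> {S \<in> RCFM. \<forall>j. S 0 j = 0}"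
    using left_mult_image_subset_RCFM[OF RCFM_matA] by blast
next
  fix S :: "'a nmat"
  assume "S \<in> {S \<in> RCFM. \<forall>j. S 0 j = 0}"
  then have S: "S \<in> RCFM" and top_row: "\<And>j. S 0 j = 0" by auto
  have "nmat_of_fun Suc \<star> S \<in> RCFM"
    by (intro RCFM_mult RCFM_nmat_of_fun inj_Suc S)
  moreover have "S = matA \<star> (nmat_of_fun Suc \<star> S)"
    using top_row by (simp add: fun_eq_iff matA_mult nmat_of_fun_mult split: nat.split)
  ultimately show "S \<in> left_mult_image matA" by (auto simp: left_mult_image_def)
qed

lemma id_minus_matA_mult:
  fixes R :: "'a::ring_1 nmat"
  shows "(nmat_minus nmat_id matA \<star> R) r j = R r j - (case r of 0 \<Rightarrow> 0 | Suc p \<Rightarrow> R p j)"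
  unfolding nmat_left_diff_distrib[OF RCFM_nmat_id RCFM_matA]
  by (simp add: nmat_minus_def nmat_id_mult matA_mult)

lemma col_sum_eq_sum_lessThan:
  "(\<And>i. N \<le> i \<Longrightarrow> S i j = 0) \<Longrightarrow> col_sum S j = (\<Sum>i<N. S i j)"
  unfolding col_sum_def by (rule sum_nonzero_eq_sum_lessThan)

lemma col_sum_id_minus_matA_mult:
  fixes R :: "'a::ring_1 nmat"
  assumes "R \<in> RCFM"
  shows "col_sum (nmat_minus nmat_id matA \<star> R) j = 0"
proof -
  obtain N where N: "\<And>i. N \<le> i \<Longrightarrow> R i j = 0"
    using RCFM_col_eventually_zero[OF assms] by blast
  define R' where "R' i = (case i of 0 \<Rightarrow> 0 | Suc p \<Rightarrow> R p j)" for i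
  have entry: "(nmat_minus nmat_id matA \<star> R) i j = R' (Suc i) - R' i" for i
    by (simp add: id_minus_matA_mult R'_def)
  have "col_sum (nmat_minus nmat_id matA \<star> R) j
      = (\<Sum>i<Suc N. (nmat_minus nmat_id matA \<star> R) i j)"
    by (rule col_sum_eq_sum_lessThan) (simp add: entry R'_def N split: nat.split)
  also have "\<dots> = (\<Sum>i<Suc N. R' (Suc i) - R' i)"
    by (simp only: entry)
  also have "\<dots> = R N j"
    by (subst sum_lessThan_telescope) (simp add: R'_def)
  finally show ?thesis by (simp add: N)
qed

lemma id_minus_matA_mult_partial_col_sums:
  "nmat_minus nmat_id matA \<star> (\<lambda>r j. \<Sum>n\<le>r. S n j) = (S :: 'a::ring_1 nmat)"
  by (auto simp: fun_eq_iff id_minus_matA_mult split: nat.split)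

lemma RCFM_partial_col_sums:
  assumes S: "S \<in> RCFM" and col_sums: "\<And>j. col_sum S j = 0"
  shows "(\<lambda>r j. \<Sum>n\<le>r. S n j) \<in> RCFM"
proof -
  have "finite {j. (\<Sum>n\<le>r. S n j) \<noteq> 0}" for r
    by (rule finite_subset[of _ "\<Union>n\<le>r. {j. S n j \<noteq> 0}"])
       (auto simp: S RCFM_row_finite intro: sum.not_neutral_contains_not_neutral)
  moreover have "finite {r. (\<Sum>n\<le>r. S n j) \<noteq> 0}" for j
  proof -
    obtain N where N: "\<And>i. N \<le> i \<Longrightarrow> S i j = 0"
      using RCFM_col_eventually_zero[OF S] by blast
    have "(\<Sum>n\<le>r. S n j) = 0" if "N \<le> r" for r
    proof -
      have "(\<Sum>n\<le>r. S n j) = (\<Sum>n<N. S n j)"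
        by (rule sum.mono_neutral_right) (use that N in auto)
      also have "\<dots> = col_sum S j"
        by (rule col_sum_eq_sum_lessThan[of N S j, OF N, symmetric])
      finally show ?thesis by (simp add: col_sums)
    qed
    then show ?thesis by (rule finite_nonzero_if_eventually_zero)
  qed
  ultimately show ?thesis by (simp add: RCFM_def)
qed

lemma left_mult_image_id_minus_matA:
  "left_mult_image (nmat_minus nmat_id matA :: 'a::ring_1 nmat) = {S \<in> RCFM. \<forall>j. col_sum S j = 0}"
proof (intro set_eqI iffI)
  fix S :: "'a nmat"
  assume S: "S \<in> left_mult_image (nmat_minus nmat_id matA)"
  then obtain R where "R \<in> RCFM" and "S = nmat_minus nmat_id matA \<star> R"
    by (auto simp: left_mult_image_def)
  then have "col_sum S j = 0" for j by (simp add: col_sum_id_minus_matA_mult)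
  with S show "S \<in> {S \<in> RCFM. \<forall>j. col_sum S j = 0}"
    using left_mult_image_subset_RCFM RCFM_minus RCFM_nmat_id RCFM_matA by blast
next
  fix S :: "'a nmat"
  assume "S \<in> {S \<in> RCFM. \<forall>j. col_sum S j = 0}"
  then have "(\<lambda>r j. \<Sum>n\<le>r. S n j) \<in> RCFM" by (simp add: RCFM_partial_col_sums)
  with id_minus_matA_mult_partial_col_sums[of S]
  show "S \<in> left_mult_image (nmat_minus nmat_id matA)"
    unfolding left_mult_image_def by (metis (mono_tags, lifting) mem_Collect_eq)
qed

lemma tail_col_sum_eq_orbit_col_sum: "tail_col_sum R i j = orbit_col_sum Suc R i j"
  unfolding tail_col_sum_def orbit_col_sum_def Suc_funpow sum_nonzero_ge_shift
  by (simp add: add.commute)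

definition tri :: "nat \<Rightarrow> nat" where
  "tri m = m * (m + 1) div 2"

lemma tri_Suc: "tri (Suc m) = tri m + Suc m"
proof -
  have "Suc m * (Suc m + 1) = m * (m + 1) + 2 * Suc m" by simp
  then show ?thesis unfolding tri_def by simp
qed

lemma tri_mono: "m \<le> m' \<Longrightarrow> tri m \<le> tri m'"
  unfolding tri_def by (intro div_le_mono mult_le_mono) auto

lemma tri_decomp: obtains m i where "i \<le> m" "r = tri m + i"
proof (induction r arbitrary: thesis)
  case 0
  show ?case by (rule 0[of 0 0]) (simp_all add: tri_def)
next
  case (Suc r)
  obtain m i where "i \<le> m" "r = tri m + i" using Suc.IH by blast
  then show ?case
    by (cases "i < m") (auto intro: Suc.prems[of "Suc i" m] Suc.prems[of 0 "Suc m"] simp: tri_Suc)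
qed

definition tri_block :: "nat \<Rightarrow> nat" where
  "tri_block r = (LEAST m. r < tri (Suc m))"

lemma tri_block_eq:
  assumes "i \<le> m" shows "tri_block (tri m + i) = m"
  unfolding tri_block_def
proof (rule Least_equality)
  show "tri m + i < tri (Suc m)" using assms by (simp add: tri_Suc)
next
  fix m' assume less: "tri m + i < tri (Suc m')"
  show "m \<le> m'"
  proof (rule ccontr)
    assume "\<not> m \<le> m'"
    then have "tri (Suc m') \<le> tri m" by (intro tri_mono) simp
    with less show False by simp
  qed
qed

definition tri_next :: "nat \<Rightarrow> nat" where
  "tri_next r = r + Suc (tri_block r)"

lemma tri_next_eq: "i \<le> m \<Longrightarrow> tri_next (tri m + i) = tri (Suc m) + i"
  by (simp add: tri_next_def tri_block_eq tri_Suc)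

lemma tri_next_less: "r < tri_next r"
  by (simp add: tri_next_def)

lemma inj_tri_next: "inj tri_next"
proof (rule injI)
  fix r r' assume eq: "tri_next r = tri_next r'"
  obtain m i where mi: "i \<le> m" "r = tri m + i" by (rule tri_decomp)
  obtain m' i' where mi': "i' \<le> m'" "r' = tri m' + i'" by (rule tri_decomp)
  have next_eq: "tri (Suc m) + i = tri (Suc m') + i'"
    using eq mi mi' by (simp add: tri_next_eq)
  then have "Suc m = Suc m'"
    using tri_block_eq[of i "Suc m"] tri_block_eq[of i' "Suc m'"] mi mi' by simp
  with next_eq mi mi' show "r = r'" by simp
qed

lemma funpow_tri_next: "i \<le> m \<Longrightarrow> (tri_next ^^ k) (tri m + i) = tri (m + k) + i"
  by (induction k) (simp_all add: tri_next_eq)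

lemma matB_transpose: "nmat_transpose matB = nmat_of_fun tri_next"
proof (intro ext)
  fix r c
  have "(\<exists>n i. 0 < n \<and> i < n \<and> c = n * (n + 1) div 2 + i \<and> r = (n - 1) * n div 2 + i)
        \<longleftrightarrow> c = tri_next r"
  proof
    assume "\<exists>n i. 0 < n \<and> i < n \<and> c = n * (n + 1) div 2 + i \<and> r = (n - 1) * n div 2 + i"
    then obtain m i where "i \<le> m" "c = tri (Suc m) + i" "r = tri m + i"
      by (auto simp: tri_def mult.commute less_Suc_eq_le gr0_conv_Suc)
    then show "c = tri_next r" by (simp add: tri_next_eq)
  next
    assume c: "c = tri_next r"
    obtain m i where mi: "i \<le> m" "r = tri m + i" by (rule tri_decomp)
    with c have "c = tri (Suc m) + i" by (simp add: tri_next_eq)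
    with mi show "\<exists>n i. 0 < n \<and> i < n \<and> c = n * (n + 1) div 2 + i \<and> r = (n - 1) * n div 2 + i"
      by (intro exI[of _ "Suc m"] exI[of _ i]) (simp add: tri_def mult.commute)
  qed
  then show "nmat_transpose matB r c = nmat_of_fun tri_next r c"
    by (simp add: nmat_transpose_def matB_def nmat_of_fun_def)
qed

lemma tri_col_sum_eq_orbit_col_sum:
  assumes "i \<le> m"
  shows "tri_col_sum R m i j = orbit_col_sum tri_next R (tri m + i) j"
  unfolding tri_col_sum_def sum_nonzero_ge_shift orbit_col_sum_def funpow_tri_next[OF assms]
  by (simp add: tri_def add.commute)

lemma finite_orbit_col_sums_tri_next_iff:
  "(\<forall>r. finite {j. orbit_col_sum tri_next R r j \<noteq> 0})
     \<longleftrightarrow> (\<forall>m i. i \<le> m \<longrightarrow> finite {j. tri_col_sum R m i j \<noteq> 0})"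
proof
  assume "\<forall>r. finite {j. orbit_col_sum tri_next R r j \<noteq> 0}"
  then show "\<forall>m i. i \<le> m \<longrightarrow> finite {j. tri_col_sum R m i j \<noteq> 0}"
    by (simp add: tri_col_sum_eq_orbit_col_sum)
next
  assume tri_finite: "\<forall>m i. i \<le> m \<longrightarrow> finite {j. tri_col_sum R m i j \<noteq> 0}"
  show "\<forall>r. finite {j. orbit_col_sum tri_next R r j \<noteq> 0}"
  proof
    fix r
    obtain m i where "i \<le> m" "r = tri m + i" by (rule tri_decomp)
    with tri_finite show "finite {j. orbit_col_sum tri_next R r j \<noteq> 0}"
      by (simp add: tri_col_sum_eq_orbit_col_sum)
  qed
qed

theorem lemmaA2:
  shows "(left_mult_image (matA :: 'k::field nmat) = {R \<in> RCFM. \<forall>j. R 0 j = 0}) \<and>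
         (left_mult_image (nmat_minus nmat_id (matA :: 'k::field nmat))
           = {R \<in> RCFM. \<forall>j. col_sum R j = 0}) \<and>
         (left_mult_image (nmat_minus nmat_id (nmat_transpose (matA :: 'k::field nmat)))
           = {R \<in> RCFM. \<forall>i. finite {j. tail_col_sum R i j \<noteq> 0}}) \<and>
         (left_mult_image (nmat_minus nmat_id (nmat_transpose (matB :: 'k::field nmat)))
           = {R \<in> RCFM. \<forall>m i. i \<le> m \<longrightarrow> finite {j. tri_col_sum R m i j \<noteq> 0}})"
  by (simp add: left_mult_image_matA left_mult_image_id_minus_matA
      matA_transpose tail_col_sum_eq_orbit_col_sum
      matB_transpose finite_orbit_col_sums_tri_next_iff
      left_mult_image_id_minus_nmat_of_fun inj_tri_next tri_next_less)

end
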